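(* Let $Z\in\mathbb{R}^{m\times n}$ and $\lambda\ge 0$, and let $\breve{k}$ be the number of singular values of $Z$ that are strictly larger than $\lambda$. Let $k\ge \breve{k}$ and let $Q\in\mathbb{R}^{m\times k}$ have orthonormal columns ($Q^\top Q=I$) such that the column span of $Q$ contains the subspace spanned by the top $\breve{k}$ left singular vectors of $Z$ (those associated with the singular values larger than $\lambda$). Then $\mathrm{SVT}_\lambda(Z)=Q\,\mathrm{SVT}_\lambda(Q^\top Z)$.
   Context: For a matrix $A$ with singular value decomposition $A=U\Sigma V^\top$ and $\lambda\ge 0$, the singular value thresholding operator is $\mathrm{SVT}_\lambda(A)=U(\Sigma-\lambda I)_+V^\top$, where $(\cdot)_+$ takes the entrywise maximum with $0$; equivalently $\mathrm{SVT}_\lambda(A)=\arg\min_X \frac12\|X-A\|_F^2+\lambda\|X\|_*$, with $\|\cdot\|_*$ the nuclear norm (sum of singular values). *)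

theory Defs
  imports "HOL-Analysis.Analysis"
begin

definition outer :: "real^'m \<Rightarrow> real^'n \<Rightarrow> real^'n^'m" where
  "outer u v = (\<chi> i j. u $ i * v $ j)"

definition compact_svd ::
  "real^'n^'m \<Rightarrow> nat \<Rightarrow> (nat \<Rightarrow> real) \<Rightarrow> (nat \<Rightarrow> real^'m) \<Rightarrow> (nat \<Rightarrow> real^'n) \<Rightarrow> bool" where
  "compact_svd A r s u v \<longleftrightarrow>
     (\<forall>i<r. s i > 0) \<and>
     (\<forall>i<r. \<forall>j<r. u i \<bullet> u j = (if i = j then 1 else 0)) \<and>
     (\<forall>i<r. \<forall>j<r. v i \<bullet> v j = (if i = j then 1 else 0)) \<and>
     A = (\<Sum>i<r. s i *\<^sub>R outer (u i) (v i))"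

text \<open>Singular value thresholding SVT_lambda(A) = U (Sigma - lambda I)_+ V^T,
  computed from an SVD of A (well defined: independent of the chosen SVD).\<close>
definition svt :: "real \<Rightarrow> real^'n^'m \<Rightarrow> real^'n^'m" where
  "svt lam A = (SOME X. \<exists>r s u v. compact_svd A r s u v \<and>
       X = (\<Sum>i<r. max (s i - lam) 0 *\<^sub>R outer (u i) (v i)))"

end

theory Submission
  imports Defs "HOL-Computational_Algebra.Polynomial"
begin

text \<open>Split \<open>Z = Z\<^sub>> + Z\<^sub>\<le>\<close> according to whether a singular value exceeds \<open>\<lambda>\<close>. If the
  singular vectors of a matrix \<open>C\<close> are orthogonal to those of \<open>B\<close> and \<open>\<parallel>C\<parallel> \<le> \<lambda>\<close>, the two
  SVDs join into one of \<open>B + C\<close>, so \<open>SVT\<^sub>\<lambda>(B + C)\<close> only sees \<open>B\<close>. This applies to \<open>Z\<close> itself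
  and to \<open>Q\<^sup>T Z = Q\<^sup>T Z\<^sub>> + Q\<^sup>T Z\<^sub>\<le>\<close>: since \<open>Q Q\<^sup>T\<close> fixes the top left singular vectors,
  \<open>Q\<^sup>T\<close> maps them isometrically, keeps them orthogonal to \<open>Q\<^sup>T Z\<^sub>\<le>\<close>, and does not increase
  norms. Applying \<open>Q\<close> then undoes \<open>Q\<^sup>T\<close> on the surviving terms. That \<open>SVT\<^sub>\<lambda>\<close> does not
  depend on the chosen SVD follows by writing it as \<open>A p(A\<^sup>T A)\<close> for an interpolating
  polynomial \<open>p\<close>; existence of an SVD follows by deflating a norm-maximizing direction.\<close>

lemma outer_matrix_vector_mult: "outer u v *v x = (v \<bullet> x) *\<^sub>R u"
  by (simp add: outer_def matrix_vector_mult_def inner_vec_def vec_eq_iff sum_distrib_left mult_ac)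

lemma transpose_outer: "transpose (outer u v) = outer v u"
  by (simp add: outer_def transpose_def mult.commute)

lemma matrix_mult_outer: "M ** outer u v = outer (M *v u) v"
  by (simp add: matrix_eq outer_matrix_vector_mult matrix_vector_mult_scaleR
           flip: matrix_vector_mul_assoc)

lemma sum_matrix_vector_mult: "(\<Sum>i\<in>I. f i) *v x = (\<Sum>i\<in>I. f i *v x)"
  by (induction I rule: infinite_finite_induct) (auto simp: matrix_vector_mult_add_rdistrib)

lemma outer_sum_matrix_vector_mult:
  "(\<Sum>i\<in>I. c i *\<^sub>R outer (u i) (v i)) *v x = (\<Sum>i\<in>I. (c i * (v i \<bullet> x)) *\<^sub>R u i)"
  by (simp add: sum_matrix_vector_mult scaleR_matrix_vector_assoc[symmetric]
      outer_matrix_vector_mult)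

lemma matrix_mult_sum: "(M::real^'k^'m) ** (\<Sum>i\<in>I. f i) = (\<Sum>i\<in>I. M ** f i)"
  by (induction I rule: infinite_finite_induct) (auto simp: matrix_add_ldistrib)

lemma transpose_sum: "transpose (\<Sum>i\<in>I. f i) = (\<Sum>i\<in>I. transpose (f i :: real^'n^'m))"
  by (induction I rule: infinite_finite_induct) (auto simp: transpose_def vec_eq_iff)

lemma matrix_mult_scaleR: "(M::real^'k^'m) ** (c *\<^sub>R A) = c *\<^sub>R (M ** A)"
  by (simp add: matrix_eq matrix_vector_mult_scaleR flip: matrix_vector_mul_assoc scaleR_matrix_vector_assoc)

lemma inner_transpose_matrix_vector: "(transpose M *v y) \<bullet> x = y \<bullet> ((M::real^'n^'m) *v x)"
  by (simp add: dot_lmul_matrix)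

definition orthonormal_on :: "('i \<Rightarrow> 'a::real_inner) \<Rightarrow> 'i set \<Rightarrow> bool" where
  "orthonormal_on w I \<longleftrightarrow> (\<forall>i\<in>I. \<forall>j\<in>I. w i \<bullet> w j = (if i = j then 1 else 0))"

lemma orthonormal_on_subset: "orthonormal_on w I \<Longrightarrow> J \<subseteq> I \<Longrightarrow> orthonormal_on w J"
  unfolding orthonormal_on_def by blast

lemma orthonormal_on_Plus:
  assumes "orthonormal_on w I" "orthonormal_on w' J" "\<forall>i\<in>I. \<forall>j\<in>J. w i \<bullet> w' j = 0"
  shows "orthonormal_on (case_sum w w') (I <+> J)"
  using assms unfolding orthonormal_on_def by (auto simp: inner_commute split: if_splits) blast+

lemma orthonormal_on_inner_sum:
  assumes "orthonormal_on w I" "finite I" "j \<in> I"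
  shows "w j \<bullet> (\<Sum>i\<in>I. c i *\<^sub>R w i) = c j"
proof -
  have "w j \<bullet> (\<Sum>i\<in>I. c i *\<^sub>R w i) = (\<Sum>i\<in>I. if j = i then c i else 0)"
    unfolding inner_sum_right using assms by (intro sum.cong) (auto simp: orthonormal_on_def)
  also have "\<dots> = c j" using assms by simp
  finally show ?thesis .
qed

lemma orthonormal_on_inner_sum_self:
  assumes "orthonormal_on w I" "finite I"
  shows "(\<Sum>i\<in>I. c i *\<^sub>R w i) \<bullet> (\<Sum>i\<in>I. c i *\<^sub>R w i) = (\<Sum>i\<in>I. (c i)\<^sup>2)"
  by (simp add: inner_sum_left orthonormal_on_inner_sum[OF assms] power2_eq_square)

lemma bessel_inequality:
  assumes "orthonormal_on w I" "finite I"
  shows "(\<Sum>i\<in>I. (w i \<bullet> y)\<^sup>2) \<le> y \<bullet> y"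
proof -
  define p where "p = (\<Sum>i\<in>I. (w i \<bullet> y) *\<^sub>R w i)"
  have "y \<bullet> p = p \<bullet> p"
    unfolding p_def orthonormal_on_inner_sum_self[OF assms]
    by (simp add: inner_sum_right power2_eq_square inner_commute)
  moreover have "0 \<le> (y - p) \<bullet> (y - p)" by simp
  ultimately have "p \<bullet> p \<le> y \<bullet> y" by (simp add: algebra_simps inner_commute)
  then show ?thesis unfolding p_def orthonormal_on_inner_sum_self[OF assms] .
qed

text \<open>\<open>compact_svd\<close> over an arbitrary finite index set, so that decompositions of
  two summands can be joined over a sum type.\<close>
definition svd_on ::
  "real^'n^'m \<Rightarrow> 'i set \<Rightarrow> ('i \<Rightarrow> real) \<Rightarrow> ('i \<Rightarrow> real^'m) \<Rightarrow> ('i \<Rightarrow> real^'n) \<Rightarrow> bool" where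
  "svd_on A I s u v \<longleftrightarrow> finite I \<and> (\<forall>i\<in>I. s i > 0) \<and> orthonormal_on u I \<and> orthonormal_on v I \<and>
     A = (\<Sum>i\<in>I. s i *\<^sub>R outer (u i) (v i))"

lemma compact_svd_iff_svd_on: "compact_svd A r s u v \<longleftrightarrow> svd_on A {..<r} s u v"
  unfolding compact_svd_def svd_on_def orthonormal_on_def by auto

lemma svd_on_matrix_vector_mult:
  "svd_on A I s u v \<Longrightarrow> A *v x = (\<Sum>i\<in>I. (s i * (v i \<bullet> x)) *\<^sub>R u i)"
  by (simp add: svd_on_def outer_sum_matrix_vector_mult)

lemma svd_on_transpose: "svd_on A I s u v \<Longrightarrow> svd_on (transpose A) I s v u"
  by (simp add: svd_on_def transpose_sum transpose_scalar transpose_outer)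

lemma svd_on_right_singular_vector:
  assumes "svd_on A I s u v" "j \<in> I"
  shows "A *v v j = s j *\<^sub>R u j"
proof -
  have "A *v v j = (\<Sum>i\<in>I. (s i * (v j \<bullet> v i)) *\<^sub>R u i)"
    by (simp add: svd_on_matrix_vector_mult[OF assms(1)] inner_commute)
  also have "\<dots> = (\<Sum>i\<in>I. if i = j then s j *\<^sub>R u j else 0)"
    using assms by (intro sum.cong) (auto simp: svd_on_def orthonormal_on_def)
  also have "\<dots> = s j *\<^sub>R u j" using assms by (simp add: svd_on_def)
  finally show ?thesis .
qed

lemma svd_on_left_singular_vector:
  "svd_on A I s u v \<Longrightarrow> j \<in> I \<Longrightarrow> transpose A *v u j = s j *\<^sub>R v j"
  by (rule svd_on_right_singular_vector[OF svd_on_transpose])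

lemma svd_on_matrix_vector_mult_eq_0:
  "svd_on A I s u v \<Longrightarrow> (\<And>i. i \<in> I \<Longrightarrow> v i \<bullet> x = 0) \<Longrightarrow> A *v x = 0"
  by (simp add: svd_on_matrix_vector_mult)

lemma svd_on_subset:
  "svd_on A I s u v \<Longrightarrow> J \<subseteq> I \<Longrightarrow> svd_on (\<Sum>i\<in>J. s i *\<^sub>R outer (u i) (v i)) J s u v"
  unfolding svd_on_def by (auto intro: orthonormal_on_subset finite_subset)

lemma svd_on_reindex:
  assumes "svd_on A I s u v" "bij_betw h J I"
  shows "svd_on A J (s \<circ> h) (u \<circ> h) (v \<circ> h)"
  using assms unfolding svd_on_def orthonormal_on_def bij_betw_def
  by (auto simp: bij_betw_finite[OF assms(2)] sum.reindex inj_on_eq_iff)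

lemma svd_on_left_mult:
  assumes "svd_on A I s u v" "\<And>i. i \<in> I \<Longrightarrow> transpose M *v (M *v u i) = u i"
  shows "svd_on (M ** A) I s (\<lambda>i. M *v u i) v"
proof -
  have "orthonormal_on (\<lambda>i. M *v u i) I"
    using assms unfolding svd_on_def orthonormal_on_def
    by (metis inner_transpose_matrix_vector inner_commute)
  then show ?thesis
    using assms(1) by (simp add: svd_on_def matrix_mult_sum matrix_mult_scaleR matrix_mult_outer)
qed

lemma svd_on_norm_le:
  assumes "svd_on A I s u v" "c \<ge> 0" "\<And>i. i \<in> I \<Longrightarrow> s i \<le> c"
  shows "norm (A *v y) \<le> c * norm y"
proof (rule power2_le_imp_le)
  have fin: "finite I" and ou: "orthonormal_on u I" and ov: "orthonormal_on v I"
    using assms(1) by (auto simp: svd_on_def)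
  have "(norm (A *v y))\<^sup>2 = (\<Sum>i\<in>I. (s i * (v i \<bullet> y))\<^sup>2)"
    unfolding power2_norm_eq_inner svd_on_matrix_vector_mult[OF assms(1)]
    by (rule orthonormal_on_inner_sum_self[OF ou fin])
  also have "\<dots> \<le> (\<Sum>i\<in>I. c\<^sup>2 * (v i \<bullet> y)\<^sup>2)"
  proof (rule sum_mono)
    fix i assume "i \<in> I"
    then have "(s i)\<^sup>2 \<le> c\<^sup>2" using assms by (auto simp: svd_on_def intro: power_mono)
    then show "(s i * (v i \<bullet> y))\<^sup>2 \<le> c\<^sup>2 * (v i \<bullet> y)\<^sup>2"
      by (simp add: power_mult_distrib mult_right_mono)
  qed
  also have "\<dots> \<le> c\<^sup>2 * (y \<bullet> y)"
    by (simp add: sum_distrib_left[symmetric] bessel_inequality[OF ov fin] mult_left_mono)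
  finally show "(norm (A *v y))\<^sup>2 \<le> (c * norm y)\<^sup>2"
    by (simp add: power_mult_distrib power2_norm_eq_inner)
  show "0 \<le> c * norm y" using assms(2) by simp
qed

lemma svd_on_singular_value_le:
  assumes "svd_on A I s u v" "j \<in> I" "\<And>y. norm (A *v y) \<le> c * norm y"
  shows "s j \<le> c"
proof -
  have "norm (u j) = 1" "norm (v j) = 1" "s j > 0"
    using assms(1,2) by (auto simp: svd_on_def orthonormal_on_def norm_eq_1)
  then show ?thesis
    using assms(3)[of "v j"] by (simp add: svd_on_right_singular_vector[OF assms(1,2)])
qed

lemma svd_on_add_orthogonal:
  assumes B: "svd_on B I s u v" and C: "svd_on C J t a b"
    and C_u: "\<And>i. i \<in> I \<Longrightarrow> transpose C *v u i = 0"
    and C_v: "\<And>i. i \<in> I \<Longrightarrow> C *v v i = 0"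
  shows "svd_on (B + C) (I <+> J) (case_sum s t) (case_sum u a) (case_sum v b)"
proof -
  have t_pos: "t j > 0" if "j \<in> J" for j using C that by (simp add: svd_on_def)
  have "t j * (u i \<bullet> a j) = 0" if "i \<in> I" "j \<in> J" for i j
    using inner_transpose_matrix_vector[of C "u i" "b j"] C_u[OF that(1)]
    by (simp add: svd_on_right_singular_vector[OF C that(2)] del: transpose_matrix_vector)
  then have ua: "\<forall>i\<in>I. \<forall>j\<in>J. u i \<bullet> a j = 0" using t_pos by fastforce
  have "t j * (v i \<bullet> b j) = 0" if "i \<in> I" "j \<in> J" for i j
    using inner_transpose_matrix_vector[of C "a j" "v i"] C_v[OF that(1)]
    by (simp add: svd_on_left_singular_vector[OF C that(2)] inner_commute del: transpose_matrix_vector)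
  then have vb: "\<forall>i\<in>I. \<forall>j\<in>J. v i \<bullet> b j = 0" using t_pos by fastforce
  show ?thesis
    using B C orthonormal_on_Plus[OF _ _ ua] orthonormal_on_Plus[OF _ _ vb]
    by (auto simp: svd_on_def sum.Plus comp_def)
qed

lemma svd_on_imp_compact_svd:
  assumes "svd_on A I s u v"
  shows "\<exists>r s u v. compact_svd A r s u v"
proof -
  obtain h where "bij_betw h {..<card I} I"
    using ex_bij_betw_nat_finite[of I] assms by (auto simp: svd_on_def atLeast0LessThan)
  then show ?thesis
    using svd_on_reindex[OF assms] compact_svd_iff_svd_on by blast
qed

lemma linear_le_quadratic_imp_zero:
  fixes a K :: real
  assumes "\<And>t. t * a \<le> t\<^sup>2 * K"
  shows "a = 0"
proof -
  define d where "d = \<bar>K\<bar> + 1"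
  have "d > 0" by (simp add: d_def)
  have "(a / d) * a \<le> (a / d)\<^sup>2 * K" by (rule assms)
  then have "a\<^sup>2 * d \<le> a\<^sup>2 * K"
    using \<open>d > 0\<close> by (simp add: power2_eq_square field_simps)
  also have "\<dots> \<le> a\<^sup>2 * \<bar>K\<bar>" by (simp add: mult_left_mono)
  finally have "a\<^sup>2 * 1 \<le> 0" by (simp add: d_def algebra_simps)
  then show ?thesis by simp
qed

lemma exists_norm_maximizer:
  fixes A :: "real^'n^'m"
  obtains x where "norm x = 1" "\<And>z. norm (A *v z) \<le> norm (A *v x) * norm z"
proof -
  obtain x0 :: "real^'n" where "norm x0 = 1" using vector_choose_size[of 1] by auto
  then have "sphere (0::real^'n) 1 \<noteq> {}" by auto
  moreover have "continuous_on (sphere 0 1) (\<lambda>z. norm (A *v z))"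
    by (intro continuous_intros)
  ultimately obtain x where "x \<in> sphere 0 1"
    and max: "\<And>z. z \<in> sphere 0 1 \<Longrightarrow> norm (A *v z) \<le> norm (A *v x)"
    using continuous_attains_sup[OF compact_sphere] by blast
  then have x: "norm x = 1" by simp
  have "norm (A *v z) \<le> norm (A *v x) * norm z" for z
  proof (cases "z = 0")
    case False
    then have "norm (A *v ((1 / norm z) *\<^sub>R z)) \<le> norm (A *v x)" by (intro max) simp
    then show ?thesis using False by (simp add: matrix_vector_mult_scaleR field_simps)
  qed simp
  with x that show thesis by blast
qed

text \<open>For \<open>y \<bottom> x\<close>, the first-order term \<open>2 t (A x \<bullet> A y)\<close> of \<open>\<parallel>A (x + t y)\<parallel>\<^sup>2\<close> must vanish,
  because \<open>\<parallel>x + t y\<parallel>\<^sup>2 = 1 + t\<^sup>2 \<parallel>y\<parallel>\<^sup>2\<close> has none.\<close>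
lemma norm_maximizer_orthogonal:
  fixes A :: "real^'n^'m"
  assumes x: "norm x = 1" and max: "\<And>z. norm (A *v z) \<le> norm (A *v x) * norm z"
    and xy: "x \<bullet> y = 0"
  shows "(A *v x) \<bullet> (A *v y) = 0"
proof -
  define \<sigma> where "\<sigma> = norm (A *v x)"
  have "t * (2 * ((A *v x) \<bullet> (A *v y))) \<le> t\<^sup>2 * (\<sigma>\<^sup>2 * (y \<bullet> y) - (A *v y) \<bullet> (A *v y))" for t
  proof -
    have "(norm (A *v (x + t *\<^sub>R y)))\<^sup>2 \<le> (\<sigma> * norm (x + t *\<^sub>R y))\<^sup>2"
      using max by (simp add: \<sigma>_def power_mono)
    moreover have "x \<bullet> x = 1" using x by (simp add: norm_eq_1)
    ultimately show ?thesis
      unfolding power_mult_distrib power2_norm_eq_inner \<sigma>_def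
      by (simp add: matrix_vector_right_distrib matrix_vector_mult_scaleR inner_add_left
          inner_add_right inner_commute xy power2_eq_square algebra_simps)
  qed
  then show ?thesis using linear_le_quadratic_imp_zero by fastforce
qed

lemma exists_singular_pair:
  fixes A :: "real^'n^'m"
  assumes "A \<noteq> 0"
  obtains \<sigma> w x where "\<sigma> > 0" "norm w = 1" "norm x = 1"
    "A *v x = \<sigma> *\<^sub>R w" "transpose A *v w = \<sigma> *\<^sub>R x"
proof -
  obtain x where x: "norm x = 1" and max: "\<And>z. norm (A *v z) \<le> norm (A *v x) * norm z"
    using exists_norm_maximizer by blast
  define \<sigma> where "\<sigma> = norm (A *v x)"
  obtain z where "A *v z \<noteq> 0" using assms by (metis matrix_eq matrix_vector_mult_0)
  then have "0 < norm (A *v z)" by simp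
  also have "\<dots> \<le> \<sigma> * norm z" unfolding \<sigma>_def by (rule max)
  finally have \<sigma>: "\<sigma> > 0" by (simp add: \<sigma>_def zero_less_mult_iff)
  define w where "w = (1 / \<sigma>) *\<^sub>R (A *v x)"
  have Ax: "A *v x = \<sigma> *\<^sub>R w" using \<sigma> by (simp add: w_def)
  have xx: "x \<bullet> x = 1" using x by (simp add: norm_eq_1)
  have "(transpose A *v w) \<bullet> y = (\<sigma> *\<^sub>R x) \<bullet> y" for y
  proof -
    define y' where "y' = y - (x \<bullet> y) *\<^sub>R x"
    have "x \<bullet> y' = 0" by (simp add: y'_def inner_diff_right xx)
    then have "w \<bullet> (A *v y') = 0"
      using norm_maximizer_orthogonal[OF x max] by (simp add: w_def)
    moreover have "A *v y = (x \<bullet> y) *\<^sub>R (A *v x) + A *v y'"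
      by (simp add: y'_def matrix_vector_mult_diff_distrib matrix_vector_mult_scaleR)
    ultimately show ?thesis
      using \<sigma> by (simp add: inner_transpose_matrix_vector inner_add_right w_def \<sigma>_def
          power2_norm_eq_inner[symmetric] power2_eq_square del: transpose_matrix_vector)
  qed
  then have "transpose A *v w = \<sigma> *\<^sub>R x" by (metis vector_eq_rdot)
  moreover have "norm w = 1" using \<sigma> by (simp add: w_def \<sigma>_def)
  ultimately show thesis using that \<sigma> x Ax by blast
qed

lemma transpose_diff: "transpose (A - B) = transpose A - transpose (B::real^'n^'m)"
  by (simp add: transpose_def vec_eq_iff)

lemma subspace_null_space: "subspace {y. (A::real^'n^'m) *v y = 0}"
  by (auto simp: subspace_def matrix_vector_right_distrib matrix_vector_mult_scaleR)

lemma rank_one_deflation: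
  fixes A :: "real^'n^'m"
  assumes "A \<noteq> 0"
  obtains \<sigma> w x where "svd_on (\<sigma> *\<^sub>R outer w x) {()} (\<lambda>_. \<sigma>) (\<lambda>_. w) (\<lambda>_. x)"
    "transpose (A - \<sigma> *\<^sub>R outer w x) *v w = 0" "(A - \<sigma> *\<^sub>R outer w x) *v x = 0"
    "dim {y. A *v y = 0} < dim {y. (A - \<sigma> *\<^sub>R outer w x) *v y = 0}"
proof -
  obtain \<sigma> w x where \<sigma>: "\<sigma> > 0" and w: "norm w = 1" and x: "norm x = 1"
    and Ax: "A *v x = \<sigma> *\<^sub>R w" and Atw: "transpose A *v w = \<sigma> *\<^sub>R x"
    using exists_singular_pair[OF assms] by blast
  define R where "R = \<sigma> *\<^sub>R outer w x"
  have R_mult: "R *v y = (\<sigma> * (x \<bullet> y)) *\<^sub>R w" for y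
    by (simp add: R_def scaleR_matrix_vector_assoc[symmetric] outer_matrix_vector_mult)
  have xx: "x \<bullet> x = 1" and ww: "w \<bullet> w = 1" using w x by (simp_all add: norm_eq_1)
  have svd_R: "svd_on R {()} (\<lambda>_. \<sigma>) (\<lambda>_. w) (\<lambda>_. x)"
    using \<sigma> xx ww by (simp add: svd_on_def orthonormal_on_def R_def)
  have rest_w: "transpose (A - R) *v w = 0"
    using Atw svd_on_left_singular_vector[OF svd_R]
    by (simp add: matrix_vector_mult_diff_rdistrib transpose_diff del: transpose_matrix_vector)
  have rest_x: "(A - R) *v x = 0"
    using Ax xx by (simp add: matrix_vector_mult_diff_rdistrib R_mult)
  have "x \<bullet> y = 0" if "A *v y = 0" for y
    using inner_transpose_matrix_vector[of A w y] that \<sigma>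
    by (simp add: Atw del: transpose_matrix_vector)
  then have "{y. A *v y = 0} \<subseteq> {y. (A - R) *v y = 0}"
    by (auto simp: matrix_vector_mult_diff_rdistrib R_mult)
  moreover have "A *v x \<noteq> 0" using Ax \<sigma> w by auto
  ultimately have "{y. A *v y = 0} \<subset> {y. (A - R) *v y = 0}"
    using rest_x by blast
  then have "dim {y. A *v y = 0} < dim {y. (A - R) *v y = 0}"
    by (metis dim_psubset span_eq_iff subspace_null_space)
  with svd_R rest_w rest_x that show thesis unfolding R_def by blast
qed

lemma svd_exists: "\<exists>r s u v. compact_svd (A::real^'n^'m) r s u v"
proof (induction "CARD('n) - dim {y. A *v y = 0}" arbitrary: A rule: less_induct)
  case less
  show ?case
  proof (cases "A = 0")
    case True
    then have "compact_svd A 0 s u v" for s u v by (simp add: compact_svd_def)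
    then show ?thesis by blast
  next
    case False
    then obtain \<sigma> w x where svd_R: "svd_on (\<sigma> *\<^sub>R outer w x) {()} (\<lambda>_. \<sigma>) (\<lambda>_. w) (\<lambda>_. x)"
      and rest: "transpose (A - \<sigma> *\<^sub>R outer w x) *v w = 0" "(A - \<sigma> *\<^sub>R outer w x) *v x = 0"
      and dim: "dim {y. A *v y = 0} < dim {y. (A - \<sigma> *\<^sub>R outer w x) *v y = 0}"
      by (rule rank_one_deflation)
    have "dim {y. (A - \<sigma> *\<^sub>R outer w x) *v y = 0} \<le> CARD('n)" by (rule dim_subset_UNIV_cart)
    with dim obtain r s u v where "compact_svd (A - \<sigma> *\<^sub>R outer w x) r s u v"
      using less by (meson diff_less_mono2 order_less_le_trans)
    then have "svd_on (A - \<sigma> *\<^sub>R outer w x) {..<r} s u v" by (simp add: compact_svd_iff_svd_on)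
    from svd_on_add_orthogonal[OF svd_R this] rest show ?thesis
      by (auto dest: svd_on_imp_compact_svd)
  qed
qed

lemma poly_interpolation_exists:
  fixes h :: "real \<Rightarrow> real"
  assumes "finite S"
  shows "\<exists>p. \<forall>x\<in>S. poly p x = h x"
  using assms
proof (induction S rule: finite_induct)
  case (insert a S)
  then obtain p where p: "\<forall>x\<in>S. poly p x = h x" by blast
  define q where "q = (\<Prod>b\<in>S. [:-b, 1:])"
  have q: "poly q x = (\<Prod>b\<in>S. x - b)" for x by (simp add: q_def poly_prod)
  then have "poly q a \<noteq> 0" "\<forall>x\<in>S. poly q x = 0"
    using insert by (auto simp: prod_zero_iff)
  then have "\<forall>x\<in>insert a S. poly (p + smult ((h a - poly p a) / poly q a) q) x = h x"
    using p by auto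
  then show ?case by blast
qed simp

lemma svd_on_inner_gram:
  assumes "svd_on A I s u v" "j \<in> I"
  shows "v j \<bullet> (transpose A *v (A *v x)) = (s j)\<^sup>2 * (v j \<bullet> x)"
  using assms inner_transpose_matrix_vector[of A "A *v x" "v j"]
    inner_transpose_matrix_vector[of A "u j" x]
  by (simp add: svd_on_right_singular_vector svd_on_left_singular_vector power2_eq_square
      inner_commute del: transpose_matrix_vector)

lemma svd_on_gram_iterate:
  assumes "svd_on A I s u v"
  shows "A *v (((\<lambda>y. transpose A *v (A *v y)) ^^ k) x)
       = (\<Sum>i\<in>I. (s i ^ (2 * k + 1) * (v i \<bullet> x)) *\<^sub>R u i)"
proof (induction k arbitrary: x)
  case 0
  then show ?case by (simp add: svd_on_matrix_vector_mult[OF assms])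
next
  case (Suc k)
  have "A *v (((\<lambda>y. transpose A *v (A *v y)) ^^ Suc k) x)
      = A *v (((\<lambda>y. transpose A *v (A *v y)) ^^ k) (transpose A *v (A *v x)))"
    by (simp only: funpow_Suc_right comp_def)
  also have "\<dots> = (\<Sum>i\<in>I. (s i ^ (2 * Suc k + 1) * (v i \<bullet> x)) *\<^sub>R u i)"
    unfolding Suc by (intro sum.cong refl)
      (simp add: svd_on_inner_gram[OF assms] power2_eq_square del: transpose_matrix_vector)
  finally show ?case .
qed

lemma svd_on_poly_gram:
  assumes "svd_on A I s u v"
  shows "(\<Sum>i\<in>I. (s i * poly p ((s i)\<^sup>2)) *\<^sub>R outer (u i) (v i)) *v x
       = (\<Sum>k\<le>degree p. coeff p k *\<^sub>R (A *v (((\<lambda>y. transpose A *v (A *v y)) ^^ k) x)))"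
proof -
  let ?G = "\<lambda>k. ((\<lambda>y. transpose A *v (A *v y)) ^^ k) x"
  have "(\<Sum>k\<le>degree p. coeff p k *\<^sub>R (A *v ?G k))
      = (\<Sum>k\<le>degree p. \<Sum>i\<in>I. (coeff p k * s i ^ (2 * k + 1) * (v i \<bullet> x)) *\<^sub>R u i)"
    by (simp add: svd_on_gram_iterate[OF assms] scaleR_sum_right mult.assoc del: transpose_matrix_vector)
  also have "\<dots> = (\<Sum>i\<in>I. (\<Sum>k\<le>degree p. coeff p k * s i ^ (2 * k + 1) * (v i \<bullet> x)) *\<^sub>R u i)"
    by (subst sum.swap) (simp add: scaleR_sum_left)
  also have "\<dots> = (\<Sum>i\<in>I. (s i * poly p ((s i)\<^sup>2) * (v i \<bullet> x)) *\<^sub>R u i)"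
  proof -
    have pow: "t ^ (2 * k + 1) = t * (t\<^sup>2) ^ k" for t :: real and k
      by (simp add: power_mult)
    show ?thesis
      by (simp only: pow) (simp add: poly_altdef sum_distrib_left sum_distrib_right mult_ac)
  qed
  also have "\<dots> = (\<Sum>i\<in>I. (s i * poly p ((s i)\<^sup>2)) *\<^sub>R outer (u i) (v i)) *v x"
    by (simp add: outer_sum_matrix_vector_mult mult.assoc)
  finally show ?thesis by (rule sym)
qed

text \<open>With \<open>p\<close> interpolating \<open>t \<mapsto> max (\<surd>t - \<lambda>) 0 / \<surd>t\<close> at the squared singular values of
  both decompositions, each thresholded sum equals \<open>A p(A\<^sup>T A)\<close>, which does not
  depend on the decomposition.\<close>
lemma svd_on_threshold_unique:
  assumes A1: "svd_on A I s u v" and A2: "svd_on A J s' u' v'"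
  shows "(\<Sum>i\<in>I. max (s i - lam) 0 *\<^sub>R outer (u i) (v i))
       = (\<Sum>j\<in>J. max (s' j - lam) 0 *\<^sub>R outer (u' j) (v' j))"
proof -
  have "finite ((\<lambda>i. (s i)\<^sup>2) ` I \<union> (\<lambda>j. (s' j)\<^sup>2) ` J)"
    using A1 A2 by (simp add: svd_on_def)
  from poly_interpolation_exists[OF this, of "\<lambda>t. max (sqrt t - lam) 0 / sqrt t"]
  obtain p where p: "\<forall>t\<in>(\<lambda>i. (s i)\<^sup>2) ` I \<union> (\<lambda>j. (s' j)\<^sup>2) ` J.
      poly p t = max (sqrt t - lam) 0 / sqrt t" ..
  have "max (s i - lam) 0 = s i * poly p ((s i)\<^sup>2)" if "i \<in> I" for i
    using p that A1 by (auto simp: svd_on_def)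
  moreover have "max (s' j - lam) 0 = s' j * poly p ((s' j)\<^sup>2)" if "j \<in> J" for j
    using p that A2 by (auto simp: svd_on_def)
  ultimately show ?thesis
    unfolding matrix_eq
    by (simp add: svd_on_poly_gram[OF A1] svd_on_poly_gram[OF A2] cong: sum.cong)
qed

lemma svt_svd_on:
  assumes "svd_on A I s u v"
  shows "svt lam A = (\<Sum>i\<in>I. max (s i - lam) 0 *\<^sub>R outer (u i) (v i))"
proof -
  have "\<exists>X r s u v. compact_svd A r s u v \<and> X = (\<Sum>i<r. max (s i - lam) 0 *\<^sub>R outer (u i) (v i))"
    using svd_exists by blast
  from someI_ex[OF this] obtain r s' u' v' where "compact_svd A r s' u' v'"
    and "svt lam A = (\<Sum>i<r. max (s' i - lam) 0 *\<^sub>R outer (u' i) (v' i))"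
    unfolding svt_def by blast
  then show ?thesis
    using svd_on_threshold_unique[OF assms, of "{..<r}" s' u' v' lam]
    by (simp add: compact_svd_iff_svd_on)
qed

lemma svd_on_subset_orthogonal:
  assumes "svd_on A I s u v" "J \<subseteq> I" "i \<in> I - J"
  shows "(\<Sum>j\<in>J. s j *\<^sub>R outer (u j) (v j)) *v v i = 0"
    and "transpose (\<Sum>j\<in>J. s j *\<^sub>R outer (u j) (v j)) *v u i = 0"
proof -
  have sub: "svd_on (\<Sum>j\<in>J. s j *\<^sub>R outer (u j) (v j)) J s u v"
    by (rule svd_on_subset[OF assms(1,2)])
  have "v j \<bullet> v i = 0" "u j \<bullet> u i = 0" if "j \<in> J" for j
    using assms that by (auto simp: svd_on_def orthonormal_on_def)
  then show "(\<Sum>j\<in>J. s j *\<^sub>R outer (u j) (v j)) *v v i = 0"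
    and "transpose (\<Sum>j\<in>J. s j *\<^sub>R outer (u j) (v j)) *v u i = 0"
    using svd_on_matrix_vector_mult_eq_0[OF sub] svd_on_matrix_vector_mult_eq_0[OF svd_on_transpose[OF sub]]
    by (simp_all del: transpose_matrix_vector)
qed

lemma norm_transpose_isometry_le:
  fixes Q :: "real^'k^'m"
  assumes "transpose Q ** Q = mat 1"
  shows "norm (transpose Q *v w) \<le> norm w"
proof -
  define z where "z = transpose Q *v w"
  have "w \<bullet> (Q *v z) = z \<bullet> z"
    by (simp add: z_def inner_transpose_matrix_vector[symmetric] del: transpose_matrix_vector)
  moreover have "(Q *v z) \<bullet> (Q *v z) = z \<bullet> z"
    using inner_transpose_matrix_vector[of Q "Q *v z" z] assms
    by (simp add: matrix_vector_mul_assoc del: transpose_matrix_vector)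
  moreover have "0 \<le> (w - Q *v z) \<bullet> (w - Q *v z)" by simp
  ultimately have "z \<bullet> z \<le> w \<bullet> w" by (simp add: algebra_simps inner_commute)
  then show ?thesis by (simp add: z_def norm_le)
qed

lemma svt_add_orthogonal:
  fixes B C :: "real^'n^'m"
  assumes "lam \<ge> 0" and B: "svd_on B I s u v"
    and C_u: "\<And>i. i \<in> I \<Longrightarrow> transpose C *v u i = 0"
    and C_v: "\<And>i. i \<in> I \<Longrightarrow> C *v v i = 0"
    and C_norm: "\<And>y. norm (C *v y) \<le> lam * norm y"
  shows "svt lam (B + C) = (\<Sum>i\<in>I. max (s i - lam) 0 *\<^sub>R outer (u i) (v i))"
proof -
  obtain r t a b where "compact_svd C r t a b" using svd_exists by blast
  then have C: "svd_on C {..<r} t a b" by (simp add: compact_svd_iff_svd_on)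
  have "max (t j - lam) 0 = 0" if "j < r" for j
    using svd_on_singular_value_le[OF C _ C_norm] that by simp
  moreover have "finite I" using B by (simp add: svd_on_def)
  ultimately show ?thesis
    using svt_svd_on[OF svd_on_add_orthogonal[OF B C C_u C_v]] by (simp add: sum.Plus comp_def)
qed

lemma svd_on_threshold_split:
  assumes svd: "svd_on Z I s u v" and lam: "lam \<ge> 0"
  obtains Z_top Z_rest where "Z = Z_top + Z_rest" "svd_on Z_top {i \<in> I. lam < s i} s u v"
    "\<And>i. i \<in> I \<Longrightarrow> lam < s i \<Longrightarrow> Z_rest *v v i = 0"
    "\<And>i. i \<in> I \<Longrightarrow> lam < s i \<Longrightarrow> transpose Z_rest *v u i = 0"
    "\<And>y. norm (Z_rest *v y) \<le> lam * norm y"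
proof -
  define Top where "Top = {i \<in> I. lam < s i}"
  define Z_rest where "Z_rest = (\<Sum>i\<in>I - Top. s i *\<^sub>R outer (u i) (v i))"
  have "finite I" using svd by (simp add: svd_on_def)
  then have "Z = (\<Sum>i\<in>Top. s i *\<^sub>R outer (u i) (v i)) + Z_rest"
    using svd by (simp add: svd_on_def Z_rest_def Top_def sum.subset_diff[of Top I])
  moreover have "svd_on (\<Sum>i\<in>Top. s i *\<^sub>R outer (u i) (v i)) {i \<in> I. lam < s i} s u v"
    unfolding Top_def by (rule svd_on_subset[OF svd]) auto
  moreover have "Z_rest *v v i = 0" "transpose Z_rest *v u i = 0" if "i \<in> I" "lam < s i" for i
    using svd_on_subset_orthogonal[OF svd, of "I - Top" i] that by (auto simp: Z_rest_def Top_def)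
  moreover have "svd_on Z_rest (I - Top) s u v"
    unfolding Z_rest_def by (rule svd_on_subset[OF svd]) auto
  then have "norm (Z_rest *v y) \<le> lam * norm y" for y
    by (rule svd_on_norm_le[OF _ lam]) (auto simp: Top_def)
  ultimately show thesis by (rule that)
qed

theorem svt_left_compression:
  fixes Z :: "real^'n^'m" and Q :: "real^'k^'m"
  assumes lam: "lam \<ge> 0" and svd: "svd_on Z I s u v" and Q: "transpose Q ** Q = mat 1"
    and range: "\<And>i. i \<in> I \<Longrightarrow> lam < s i \<Longrightarrow> u i \<in> range (\<lambda>x. Q *v x)"
  shows "svt lam Z = Q ** svt lam (transpose Q ** Z)"
proof -
  obtain Z_top Z_rest where Z: "Z = Z_top + Z_rest"
    and svd_top: "svd_on Z_top {i \<in> I. lam < s i} s u v"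
    and rest_v: "\<And>i. i \<in> I \<Longrightarrow> lam < s i \<Longrightarrow> Z_rest *v v i = 0"
    and rest_u: "\<And>i. i \<in> I \<Longrightarrow> lam < s i \<Longrightarrow> transpose Z_rest *v u i = 0"
    and rest_norm: "\<And>y. norm (Z_rest *v y) \<le> lam * norm y"
    by (rule svd_on_threshold_split[OF svd lam]) blast
  have proj: "Q *v (transpose Q *v u i) = u i" if top: "i \<in> I" "lam < s i" for i
  proof -
    obtain x where "u i = Q *v x" using range[OF top] by blast
    then show ?thesis
      using Q by (simp add: matrix_vector_mul_assoc del: transpose_matrix_vector)
  qed
  have "svd_on (transpose Q ** Z_top) {i \<in> I. lam < s i} s (\<lambda>i. transpose Q *v u i) v"
    by (rule svd_on_left_mult[OF svd_top]) (simp add: proj del: transpose_matrix_vector)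
  moreover have "transpose (transpose Q ** Z_rest) *v (transpose Q *v u i) = 0"
    if "i \<in> I" "lam < s i" for i
    using rest_u[OF that] proj[OF that]
    by (simp add: matrix_transpose_mul matrix_vector_mul_assoc[symmetric] del: transpose_matrix_vector)
  moreover have "norm ((transpose Q ** Z_rest) *v y) \<le> lam * norm y" for y
    using norm_transpose_isometry_le[OF Q, of "Z_rest *v y"] rest_norm[of y]
    by (simp add: matrix_vector_mul_assoc[symmetric] del: transpose_matrix_vector)
  ultimately have "svt lam (transpose Q ** Z)
      = (\<Sum>i\<in>{i \<in> I. lam < s i}. max (s i - lam) 0 *\<^sub>R outer (transpose Q *v u i) (v i))"
    using rest_v lam unfolding Z matrix_add_ldistrib
    by (intro svt_add_orthogonal)
      (simp_all add: matrix_vector_mul_assoc[symmetric] del: transpose_matrix_vector)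
  moreover have "svt lam Z = (\<Sum>i\<in>{i \<in> I. lam < s i}. max (s i - lam) 0 *\<^sub>R outer (u i) (v i))"
    unfolding Z by (rule svt_add_orthogonal[OF lam svd_top])
      (simp_all add: rest_u rest_v rest_norm del: transpose_matrix_vector)
  ultimately show ?thesis
    by (simp add: matrix_mult_sum matrix_mult_scaleR matrix_mult_outer proj del: transpose_matrix_vector)
qed

theorem proposition4:
  fixes Z :: "real^'n^'m" and Q :: "real^'k^'m" and lam :: real
    and r :: nat and s :: "nat \<Rightarrow> real" and u :: "nat \<Rightarrow> real^'m" and v :: "nat \<Rightarrow> real^'n"
  assumes lam: "lam \<ge> 0"
    and svd: "compact_svd Z r s u v"
    and k: "card {i. i < r \<and> s i > lam} \<le> CARD('k)"
    and Q_orth: "transpose Q ** Q = mat 1"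
    and Q_span: "span {u i | i. i < r \<and> s i > lam} \<subseteq> range (\<lambda>x. Q *v x)"
  shows "svt lam Z = Q ** svt lam (transpose Q ** Z)"
proof (rule svt_left_compression[OF lam _ Q_orth])
  show "svd_on Z {..<r} s u v" using svd by (simp add: compact_svd_iff_svd_on)
  show "u i \<in> range (\<lambda>x. Q *v x)" if "i \<in> {..<r}" "lam < s i" for i
    using Q_span span_base[of "u i" "{u i | i. i < r \<and> s i > lam}"] that by auto
qed

end
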